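(* Let $G=(V,E)$ be an undirected graph, let $K$ be the set of in-degree vectors of all orientations of $G$, and let $C_1\subset\dots\subset C_q=V$, $\{S_1,\dots,S_q\}$ and $\beta_1>\dots>\beta_q$ be the canonical chain, canonical partition and essential value-sequence of $K$. An orientation $D$ of $G$ is decreasingly minimal if and only if $\varrho_D(C_i)=0$ for each $i=1,\dots,q$ and $\beta_i-1\le\varrho_D(v)\le\beta_i$ for every node $v\in S_i$ $(i=1,\dots,q)$.
   Context: $\varrho_D(v)$ is the number of arcs of $D$ with head $v$, and $\varrho_D(X)$ the number of arcs entering $X$ (head in $X$, tail outside). The in-degree vector of $D$ is $(\varrho_D(v))_{v\in V}$. An orientation is decreasingly minimal if its in-degree vector is decreasingly minimal in $K$ (largest component as small as possible, then the second largest, etc.). Canonical objects: take a decreasingly minimal $m\in K$; for $u\in V$ let $T_m(u)=\{s\in V: m+\chi_s-\chi_u\in K\}$. Put $\beta_1=\max_v m(v)$, $C_1=\bigcup\{T_m(u):m(u)=\beta_1\}$; for $i\ge2$, while $C_{i-1}\ne V$, put $\beta_i=\max\{m(s):s\in V-C_{i-1}\}$, $C_i=\bigcup\{T_m(u):m(u)\ge\beta_i\}$; stop when $C_q=V$; $S_i=C_i-C_{i-1}$ with $C_0=\emptyset$. These objects are known not to depend on the choice of $m$. *)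

theory Defs
  imports Main "HOL-Library.Multiset"
begin

text \<open>An undirected graph G = (V,E) (parallel edges and loops allowed) is given by a
finite vertex set V, a finite edge set E and an endpoint map ends; edge e joins
fst (ends e) and snd (ends e).\<close>

definition is_orientation :: "'e set \<Rightarrow> ('e \<Rightarrow> 'v \<times> 'v) \<Rightarrow> ('e \<Rightarrow> 'v) \<Rightarrow> bool" where
  "is_orientation E ends h \<longleftrightarrow> (\<forall>e\<in>E. h e = fst (ends e) \<or> h e = snd (ends e))"

definition tail_of :: "('e \<Rightarrow> 'v \<times> 'v) \<Rightarrow> ('e \<Rightarrow> 'v) \<Rightarrow> 'e \<Rightarrow> 'v" where
  "tail_of ends h e = (if h e = fst (ends e) then snd (ends e) else fst (ends e))"

definition indeg :: "'e set \<Rightarrow> ('e \<Rightarrow> 'v) \<Rightarrow> 'v \<Rightarrow> int" where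
  "indeg E h v = int (card {e\<in>E. h e = v})"

definition indeg_set :: "'e set \<Rightarrow> ('e \<Rightarrow> 'v \<times> 'v) \<Rightarrow> ('e \<Rightarrow> 'v) \<Rightarrow> 'v set \<Rightarrow> nat" where
  "indeg_set E ends h X = card {e\<in>E. h e \<in> X \<and> tail_of ends h e \<notin> X}"

definition indeg_vec :: "'v set \<Rightarrow> 'e set \<Rightarrow> ('e \<Rightarrow> 'v) \<Rightarrow> 'v \<Rightarrow> int" where
  "indeg_vec V E h = (\<lambda>v. if v \<in> V then indeg E h v else 0)"

definition indeg_vectors :: "'v set \<Rightarrow> 'e set \<Rightarrow> ('e \<Rightarrow> 'v \<times> 'v) \<Rightarrow> ('v \<Rightarrow> int) set" where
  "indeg_vectors V E ends = {indeg_vec V E h | h. is_orientation E ends h}"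

definition dec_seq :: "'v set \<Rightarrow> ('v \<Rightarrow> int) \<Rightarrow> int list" where
  "dec_seq V m = rev (sorted_list_of_multiset (image_mset m (mset_set V)))"

definition dec_smaller :: "'v set \<Rightarrow> ('v \<Rightarrow> int) \<Rightarrow> ('v \<Rightarrow> int) \<Rightarrow> bool" where
  "dec_smaller V m' m \<longleftrightarrow> (dec_seq V m', dec_seq V m) \<in> lexord {(a, b). a < b}"

definition dec_min :: "'v set \<Rightarrow> ('v \<Rightarrow> int) set \<Rightarrow> ('v \<Rightarrow> int) \<Rightarrow> bool" where
  "dec_min V K m \<longleftrightarrow> m \<in> K \<and> \<not> (\<exists>m'\<in>K. dec_smaller V m' m)"

definition Tm :: "'v set \<Rightarrow> ('v \<Rightarrow> int) set \<Rightarrow> ('v \<Rightarrow> int) \<Rightarrow> 'v \<Rightarrow> 'v set" where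
  "Tm V K m u = {s\<in>V. (\<lambda>v. m v + (if v = s then 1 else 0) - (if v = u then 1 else 0)) \<in> K}"

text \<open>canon_C V K m i = C_i (C_0 = {}); beta_i = max m over V - C_(i-1);
C_i = union of T_m(u) over m(u) \<ge> beta_i  (for i = 1, since beta_1 = max m,
this is the union over m(u) = beta_1)\<close>
fun canon_C :: "'v set \<Rightarrow> ('v \<Rightarrow> int) set \<Rightarrow> ('v \<Rightarrow> int) \<Rightarrow> nat \<Rightarrow> 'v set" where
  "canon_C V K m 0 = {}"
| "canon_C V K m (Suc i) =
     (let b = Max (m ` (V - canon_C V K m i)) in \<Union>{Tm V K m u | u. u \<in> V \<and> b \<le> m u})"

definition canon_beta :: "'v set \<Rightarrow> ('v \<Rightarrow> int) set \<Rightarrow> ('v \<Rightarrow> int) \<Rightarrow> nat \<Rightarrow> int" where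
  "canon_beta V K m i = Max (m ` (V - canon_C V K m (i - 1)))"

definition canon_q :: "'v set \<Rightarrow> ('v \<Rightarrow> int) set \<Rightarrow> ('v \<Rightarrow> int) \<Rightarrow> nat" where
  "canon_q V K m = (LEAST q. canon_C V K m q = V)"

definition canon_S :: "'v set \<Rightarrow> ('v \<Rightarrow> int) set \<Rightarrow> ('v \<Rightarrow> int) \<Rightarrow> nat \<Rightarrow> 'v set" where
  "canon_S V K m i = canon_C V K m i - canon_C V K m (i - 1)"

end

(* Reversing a directed path from s to u moves one unit of in-degree from u to s; conversely,
   if m + \<chi>_s - \<chi>_u is again an in-degree vector, then s reaches u, since the set of vertices
   reaching u is entered by no arc and its in-degree sum is already the minimum possible.
   Hence T_m(u) is the set of vertices reaching u, every C_i is entered by no arc of the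
   orientation realising m, and decreasing minimality squeezes m into {\<beta>_i - 1, \<beta>_i} on S_i.

   An orientation D is decreasingly minimal iff its in-degree multiset equals that of m.
   If D satisfies the conditions, its in-degree sum over each S_i equals that of m and both
   take only the values \<beta>_i - 1, \<beta>_i there, so the multisets agree level by level.
   Conversely, if the multisets agree, induction along the chain shows that outside C_(i-1)
   the in-degrees of D are at most \<beta>_i and take the value \<beta>_i on S_i at most as often
   as m does; since the sum over S_i exceeds that of m by \<rho>_D(C_i), this forces
   \<rho>_D(C_i) = 0 together with the bounds on S_i. *)

theory Submission
  imports Defs
begin

lemma count_image_mset_mset_set:
  assumes "finite S"
  shows "count (image_mset f (mset_set S)) y = card {x\<in>S. f x = y}"
proof -
  have "count (image_mset f (mset_set S)) y = (\<Sum>x\<in>f -` {y} \<inter> S. 1)"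
    using assms by (simp add: count_image_mset)
  also have "f -` {y} \<inter> S = {x\<in>S. f x = y}" by auto
  finally show ?thesis by simp
qed

lemma sorted_list_of_multiset_pivot:
  fixes A :: "'a::linorder multiset"
  shows "sorted_list_of_multiset A =
    sorted_list_of_multiset (filter_mset (\<lambda>y. y < t) A) @ replicate (count A t) t @
    sorted_list_of_multiset (filter_mset (\<lambda>y. t < y) A)" (is "_ = ?L")
proof -
  have "mset ?L = A"
    by (rule multiset_eqI) (auto simp: not_less_iff_gr_or_eq)
  moreover have "sorted ?L"
    by (auto simp: sorted_append)
  ultimately show ?thesis
    by (metis sorted_list_of_multiset_mset sorted_sort_id)
qed

lemma lexord_rev_sorted_list_of_multiset:
  fixes A B :: "'a::linorder multiset"
  assumes size: "size A = size B"
    and above: "filter_mset (\<lambda>y. t < y) A = filter_mset (\<lambda>y. t < y) B"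
    and at: "count A t < count B t"
  shows "(rev (sorted_list_of_multiset A), rev (sorted_list_of_multiset B)) \<in> lexord {(a, b). a < b}"
proof -
  define P where "P = rev (sorted_list_of_multiset (filter_mset (\<lambda>y. t < y) A))"
  define RA where "RA = rev (sorted_list_of_multiset (filter_mset (\<lambda>y. y < t) A))"
  define RB where "RB = rev (sorted_list_of_multiset (filter_mset (\<lambda>y. y < t) B))"
  have A: "rev (sorted_list_of_multiset A) = P @ replicate (count A t) t @ RA"
    unfolding P_def RA_def by (subst sorted_list_of_multiset_pivot[of _ t]) simp
  have B: "rev (sorted_list_of_multiset B) = P @ replicate (count B t) t @ RB"
    unfolding P_def RB_def above by (subst sorted_list_of_multiset_pivot[of _ t]) simp
  have "length (rev (sorted_list_of_multiset A)) = length (rev (sorted_list_of_multiset B))"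
    using size size_mset[of "sorted_list_of_multiset A"] size_mset[of "sorted_list_of_multiset B"] by simp
  then obtain y RA' where RA: "RA = y # RA'"
    using at unfolding A B by (cases RA) auto
  have "y < t"
  proof -
    have "y \<in> set RA" using RA by simp
    then show ?thesis unfolding RA_def by simp
  qed
  obtain d where "count B t = count A t + Suc d"
    using at less_imp_Suc_add by fastforce
  then have "rev (sorted_list_of_multiset B) = (P @ replicate (count A t) t) @ t # replicate d t @ RB"
    unfolding B by (simp add: replicate_add replicate_append_same)
  moreover have "rev (sorted_list_of_multiset A) = (P @ replicate (count A t) t) @ y # RA'"
    unfolding A RA by simp
  ultimately show ?thesis
    by (simp only:) (rule lexord_append_left_rightI, simp add: \<open>y < t\<close>)
qed

definition unit_shift :: "('v \<Rightarrow> int) \<Rightarrow> 'v \<Rightarrow> 'v \<Rightarrow> 'v \<Rightarrow> int" where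
  "unit_shift m s u = (\<lambda>v. m v + (if v = s then 1 else 0) - (if v = u then 1 else 0))"

lemma Tm_eq: "Tm V K m u = {s\<in>V. unit_shift m s u \<in> K}"
  unfolding Tm_def unit_shift_def ..

lemma unit_shift_self [simp]: "unit_shift m u u = m"
  unfolding unit_shift_def by simp

lemma dec_seq_eq_iff:
  "dec_seq V m' = dec_seq V m \<longleftrightarrow> image_mset m' (mset_set V) = image_mset m (mset_set V)"
proof
  assume "dec_seq V m' = dec_seq V m"
  then have "mset (dec_seq V m') = mset (dec_seq V m)" by simp
  then show "image_mset m' (mset_set V) = image_mset m (mset_set V)"
    by (simp add: dec_seq_def)
qed (simp add: dec_seq_def)

lemma dec_smaller_unit_shift:
  assumes V: "finite V" and u: "u \<in> V" and su: "s \<noteq> u" and gap: "m s + 2 \<le> m u"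
  shows "dec_smaller V (unit_shift m s u) m"
proof -
  let ?m' = "unit_shift m s u"
  have above: "{x\<in>V. m u < ?m' x} = {x\<in>V. m u < m x}"
    using gap unfolding unit_shift_def by auto
  have "filter_mset (\<lambda>y. m u < y) (image_mset ?m' (mset_set V)) =
      filter_mset (\<lambda>y. m u < y) (image_mset m (mset_set V))"
    unfolding filter_mset_image_mset filter_mset_mset_set[OF V] above
  proof (rule image_mset_cong)
    fix x
    assume "x \<in># mset_set {x\<in>V. m u < m x}"
    then show "?m' x = m x"
      using V gap unfolding unit_shift_def by auto
  qed
  moreover have "card {x\<in>V. ?m' x = m u} < card {x\<in>V. m x = m u}"
  proof -
    have "{x\<in>V. ?m' x = m u} = {x\<in>V. m x = m u} - {u}"
      using gap su unfolding unit_shift_def by auto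
    then show ?thesis
      by (simp only:) (rule card_Diff1_less, use V u in auto)
  qed
  ultimately show ?thesis
    unfolding dec_smaller_def dec_seq_def
    by (intro lexord_rev_sorted_list_of_multiset) (simp_all add: V count_image_mset_mset_set)
qed

lemma dec_min_image_mset_eq:
  assumes "dec_min V K m" and "dec_min V K m'"
  shows "image_mset m' (mset_set V) = image_mset m (mset_set V)"
proof -
  have "(dec_seq V m', dec_seq V m) \<in> lexord {(a, b). a < b} \<or> dec_seq V m' = dec_seq V m \<or>
      (dec_seq V m, dec_seq V m') \<in> lexord {(a, b). a < b}"
    by (rule lexord_linear) auto
  then have "dec_seq V m' = dec_seq V m"
    using assms unfolding dec_min_def dec_smaller_def by blast
  then show ?thesis
    by (simp add: dec_seq_eq_iff)
qed

lemma dec_min_if_image_mset_eq: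
  assumes "dec_min V K m" and "m' \<in> K"
    and "image_mset m' (mset_set V) = image_mset m (mset_set V)"
  shows "dec_min V K m'"
proof -
  have "dec_seq V m' = dec_seq V m"
    using assms(3) by (simp add: dec_seq_eq_iff)
  then show ?thesis
    using assms(1,2) unfolding dec_min_def dec_smaller_def by simp
qed

lemma sum_two_levels_le:
  fixes f :: "'a \<Rightarrow> int"
  assumes S: "finite S" and le: "\<forall>v\<in>S. f v \<le> b"
  shows "(\<Sum>v\<in>S. f v) \<le> (b - 1) * int (card S) + int (card {v\<in>S. f v = b})"
    and "(\<Sum>v\<in>S. f v) = (b - 1) * int (card S) + int (card {v\<in>S. f v = b}) \<longleftrightarrow>
      (\<forall>v\<in>S. b - 1 \<le> f v)"
proof -
  define g where "g v = b - 1 + (if f v = b then 1 else 0)" for v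
  have sum_g: "(\<Sum>v\<in>S. g v) = (b - 1) * int (card S) + int (card {v\<in>S. f v = b})"
    unfolding g_def using S by (simp add: sum.distrib sum.If_cases Int_def conj_commute)
  have f_le_g: "\<forall>v\<in>S. f v \<le> g v"
    using le unfolding g_def by force
  then show "(\<Sum>v\<in>S. f v) \<le> (b - 1) * int (card S) + int (card {v\<in>S. f v = b})"
    unfolding sum_g[symmetric] by (simp add: sum_mono)
  have "(\<Sum>v\<in>S. f v) = (\<Sum>v\<in>S. g v) \<longleftrightarrow> (\<Sum>v\<in>S. g v - f v) = 0"
    by (auto simp: sum_subtractf)
  also have "\<dots> \<longleftrightarrow> (\<forall>v\<in>S. g v = f v)"
    using S f_le_g by (simp add: sum_nonneg_eq_0_iff)
  also have "\<dots> \<longleftrightarrow> (\<forall>v\<in>S. b - 1 \<le> f v)"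
    using le unfolding g_def by force
  finally show "(\<Sum>v\<in>S. f v) = (b - 1) * int (card S) + int (card {v\<in>S. f v = b}) \<longleftrightarrow>
      (\<forall>v\<in>S. b - 1 \<le> f v)"
    unfolding sum_g .
qed

lemma image_mset_eq_if_two_levels:
  fixes f g :: "'a \<Rightarrow> int"
  assumes S: "finite S"
    and f: "\<forall>v\<in>S. b - 1 \<le> f v \<and> f v \<le> b" and g: "\<forall>v\<in>S. b - 1 \<le> g v \<and> g v \<le> b"
    and sum: "(\<Sum>v\<in>S. f v) = (\<Sum>v\<in>S. g v)"
  shows "image_mset f (mset_set S) = image_mset g (mset_set S)"
proof (rule multiset_eqI)
  fix y
  have top: "card {v\<in>S. f v = b} = card {v\<in>S. g v = b}"
    using sum sum_two_levels_le(2)[OF S, of f b] sum_two_levels_le(2)[OF S, of g b] f g by simp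
  have "card {v\<in>S. f v = y} = card {v\<in>S. g v = y}"
  proof -
    consider "y = b" | "y = b - 1" | "y \<noteq> b" "y \<noteq> b - 1" by blast
    then show ?thesis
    proof cases
      case 2
      then have "{v\<in>S. f v = y} = S - {v\<in>S. f v = b}" "{v\<in>S. g v = y} = S - {v\<in>S. g v = b}"
        using f g by force+
      then show ?thesis
        using S top by (simp add: card_Diff_subset)
    next
      case 3
      then have "{v\<in>S. f v = y} = {}" "{v\<in>S. g v = y} = {}"
        using f g by force+
      then show ?thesis by (simp only:)
    qed (use top in simp)
  qed
  then show "count (image_mset f (mset_set S)) y = count (image_mset g (mset_set S)) y"
    by (simp add: S count_image_mset_mset_set)
qed

lemma tail_of_fun_upd_other [simp]: "e' \<noteq> e \<Longrightarrow> tail_of ends (h(e := a)) e' = tail_of ends h e'"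
  unfolding tail_of_def by simp

lemma indeg_fun_upd:
  assumes E: "finite E" and e: "e \<in> E" "h e = b" and ab: "a \<noteq> b"
  shows "indeg E (h(e := a)) = unit_shift (indeg E h) a b"
proof
  fix w
  let ?A = "{e'\<in>E. h e' = w}"
  consider "w = a" | "w = b" | "w \<noteq> a" "w \<noteq> b" by blast
  then show "indeg E (h(e := a)) w = unit_shift (indeg E h) a b w"
  proof cases
    case 1
    then have "{e'\<in>E. (h(e := a)) e' = w} = insert e ?A" and "e \<notin> ?A"
      using e ab by auto
    then show ?thesis
      using E 1 ab by (simp add: indeg_def unit_shift_def)
  next
    case 2
    then have "{e'\<in>E. (h(e := a)) e' = w} = ?A - {e}" and "e \<in> ?A"
      using e ab by auto
    then show ?thesis
      using E 2 ab card.remove[of ?A e] by (simp add: indeg_def unit_shift_def)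
  next
    case 3
    then have "{e'\<in>E. (h(e := a)) e' = w} = ?A"
      using e by auto
    then show ?thesis
      using 3 by (simp add: indeg_def unit_shift_def)
  qed
qed

locale finite_graph =
  fixes V :: "'v set" and E :: "'e set" and ends :: "'e \<Rightarrow> 'v \<times> 'v"
  assumes finite_V: "finite V" and finite_E: "finite E"
    and ends_in_V: "\<forall>e\<in>E. fst (ends e) \<in> V \<and> snd (ends e) \<in> V"
begin

abbreviation K :: "('v \<Rightarrow> int) set" where
  "K \<equiv> indeg_vectors V E ends"

definition has_arc :: "('e \<Rightarrow> 'v) \<Rightarrow> 'v \<Rightarrow> 'v \<Rightarrow> bool" where
  "has_arc h a b \<longleftrightarrow> (\<exists>e\<in>E. h e = b \<and> tail_of ends h e = a \<and> a \<noteq> b)"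

definition in_closed :: "('e \<Rightarrow> 'v) \<Rightarrow> 'v set \<Rightarrow> bool" where
  "in_closed h X \<longleftrightarrow> (\<forall>e\<in>E. h e \<in> X \<longrightarrow> tail_of ends h e \<in> X)"

definition inner_edges :: "'v set \<Rightarrow> nat" where
  "inner_edges X = card {e\<in>E. fst (ends e) \<in> X \<and> snd (ends e) \<in> X}"

lemma head_in_V: "is_orientation E ends h \<Longrightarrow> e \<in> E \<Longrightarrow> h e \<in> V"
  using ends_in_V unfolding is_orientation_def by auto

lemma tail_in_V: "e \<in> E \<Longrightarrow> tail_of ends h e \<in> V"
  using ends_in_V unfolding tail_of_def by auto

lemma indeg_vec_in_K: "is_orientation E ends h \<Longrightarrow> indeg_vec V E h \<in> K"
  unfolding indeg_vectors_def by blast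

lemma reverse_arc:
  assumes h: "is_orientation E ends h"
    and e: "e \<in> E" "h e = b" "tail_of ends h e = a" and ab: "a \<noteq> b"
  shows "is_orientation E ends (h(e := a))"
    and "indeg_vec V E (h(e := a)) = unit_shift (indeg_vec V E h) a b"
proof -
  have "a = fst (ends e) \<or> a = snd (ends e)"
    using e unfolding tail_of_def by auto
  then show "is_orientation E ends (h(e := a))"
    using h unfolding is_orientation_def by auto
  have "a \<in> V" "b \<in> V"
    using e head_in_V[OF h] tail_in_V by auto
  then show "indeg_vec V E (h(e := a)) = unit_shift (indeg_vec V E h) a b"
    using indeg_fun_upd[of E e h b a, OF finite_E e(1,2) ab]
    by (auto simp: indeg_vec_def unit_shift_def fun_eq_iff)
qed

lemma path_after_reversal:
  assumes "tail_of ends h e = s"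
  shows "(has_arc h ^^ k) a u \<Longrightarrow> a \<noteq> s \<Longrightarrow>
    (has_arc (h(e := s)) ^^ k) a u \<or> (\<exists>j<k. (has_arc h ^^ j) s u)"
proof (induction k arbitrary: a)
  case 0
  then show ?case by simp
next
  case (Suc k)
  obtain c where ac: "has_arc h a c" and cu: "(has_arc h ^^ k) c u"
    using relpowp_Suc_D2[OF Suc.prems(1)] by blast
  then obtain e' where e': "e' \<in> E" "h e' = c" "tail_of ends h e' = a" "a \<noteq> c"
    unfolding has_arc_def by blast
  have "e' \<noteq> e"
    using e' assms Suc.prems(2) by auto
  then have ac': "has_arc (h(e := s)) a c"
    unfolding has_arc_def using e' by (intro bexI[of _ e']) auto
  show ?case
  proof (cases "c = s")
    case True
    then show ?thesis using cu by blast
  next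
    case False
    then show ?thesis
      using Suc.IH[OF cu] relpowp_Suc_I2[of "has_arc (h(e := s))", OF ac'] less_SucI by blast
  qed
qed

text \<open>Reversing the first arc s \<rightarrow> b of a path from s to u turns m into
  m + \<chi>_s - \<chi>_b; the rest of the path either survives the reversal or meets s, which then
  has a shorter path to u.\<close>

lemma unit_shift_in_K_if_path:
  "is_orientation E ends h \<Longrightarrow> (has_arc h ^^ n) s u \<Longrightarrow> unit_shift (indeg_vec V E h) s u \<in> K"
proof (induction n arbitrary: h s rule: less_induct)
  case (less n)
  show ?case
  proof (cases n)
    case 0
    then show ?thesis using less.prems indeg_vec_in_K by simp
  next
    case (Suc k)
    obtain b where "has_arc h s b" and bu: "(has_arc h ^^ k) b u"
      using relpowp_Suc_D2 less.prems(2) Suc by metis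
    then obtain e where e: "e \<in> E" "h e = b" "tail_of ends h e = s" and sb: "s \<noteq> b"
      unfolding has_arc_def by blast
    from path_after_reversal[OF e(3) bu] sb have
      "(has_arc (h(e := s)) ^^ k) b u \<or> (\<exists>j<k. (has_arc h ^^ j) s u)" by simp
    then show ?thesis
    proof
      assume "(has_arc (h(e := s)) ^^ k) b u"
      then have "unit_shift (indeg_vec V E (h(e := s))) b u \<in> K"
        using less.IH Suc reverse_arc(1)[OF less.prems(1) e sb] by blast
      then show ?thesis
        unfolding reverse_arc(2)[OF less.prems(1) e sb] by (simp add: unit_shift_def)
    next
      assume "\<exists>j<k. (has_arc h ^^ j) s u"
      then show ?thesis
        using less.IH less.prems(1) Suc by (meson less_SucI)
    qed
  qed
qed

lemma sum_indeg_eq: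
  assumes h: "is_orientation E ends h" and X: "finite X"
  shows "(\<Sum>x\<in>X. indeg E h x) = int (inner_edges X) + int (indeg_set E ends h X)"
proof -
  have "(\<Sum>x\<in>X. card {e\<in>E. h e = x}) = card (\<Union>x\<in>X. {e\<in>E. h e = x})"
    using X finite_E by (intro card_UN_disjoint[symmetric]) auto
  also have "(\<Union>x\<in>X. {e\<in>E. h e = x}) =
      {e\<in>E. fst (ends e) \<in> X \<and> snd (ends e) \<in> X} \<union> {e\<in>E. h e \<in> X \<and> tail_of ends h e \<notin> X}"
    using h unfolding is_orientation_def tail_of_def by auto
  also have "card \<dots> = inner_edges X + indeg_set E ends h X"
    unfolding inner_edges_def indeg_set_def using h finite_E
    by (intro card_Un_disjoint) (auto simp: is_orientation_def tail_of_def)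
  finally show ?thesis
    unfolding indeg_def by (metis of_nat_add of_nat_sum)
qed

lemma indeg_set_eq_0_iff: "indeg_set E ends h X = 0 \<longleftrightarrow> in_closed h X"
  unfolding indeg_set_def in_closed_def using finite_E by auto

lemma in_closed_reaching: "in_closed h {x\<in>V. (has_arc h)\<^sup>*\<^sup>* x u}"
  unfolding in_closed_def
proof (intro ballI impI)
  fix e
  assume e: "e \<in> E" "h e \<in> {x\<in>V. (has_arc h)\<^sup>*\<^sup>* x u}"
  have "(has_arc h)\<^sup>*\<^sup>* (tail_of ends h e) (h e)"
    using e(1) unfolding has_arc_def by (cases "tail_of ends h e = h e") auto
  then show "tail_of ends h e \<in> {x\<in>V. (has_arc h)\<^sup>*\<^sup>* x u}"
    using e tail_in_V by auto
qed

text \<open>The vertices reaching u form a set X that no arc enters, so the in-degrees on X sum to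
  the minimum possible value, the number of edges inside X; moving a unit of in-degree
  from u \<in> X to s \<notin> X would go below it.\<close>

lemma reaching_if_unit_shift_in_K:
  assumes h: "is_orientation E ends h" and s: "s \<in> V" and u: "u \<in> V"
    and shift: "unit_shift (indeg_vec V E h) s u \<in> K"
  shows "(has_arc h)\<^sup>*\<^sup>* s u"
proof (rule ccontr)
  assume not_reach: "\<not> (has_arc h)\<^sup>*\<^sup>* s u"
  define X where "X = {x\<in>V. (has_arc h)\<^sup>*\<^sup>* x u}"
  have X: "finite X" "X \<subseteq> V" "u \<in> X" "s \<notin> X"
    unfolding X_def using finite_V u not_reach by auto
  obtain h' where h': "is_orientation E ends h'"
    and eq: "indeg_vec V E h' = unit_shift (indeg_vec V E h) s u"
    using shift unfolding indeg_vectors_def by auto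
  have "(\<Sum>x\<in>X. indeg E h' x) = (\<Sum>x\<in>X. unit_shift (indeg E h) s u x)"
  proof (rule sum.cong)
    fix x
    assume "x \<in> X"
    then show "indeg E h' x = unit_shift (indeg E h) s u x"
      using X(2) fun_cong[OF eq, of x] by (auto simp: indeg_vec_def unit_shift_def)
  qed simp
  also have "\<dots> = (\<Sum>x\<in>X. indeg E h x) - 1"
    using X by (simp add: unit_shift_def sum.distrib sum_subtractf)
  also have "\<dots> = int (inner_edges X) - 1"
    using sum_indeg_eq[OF h X(1)] in_closed_reaching indeg_set_eq_0_iff
    unfolding X_def by simp
  finally show False
    using sum_indeg_eq[OF h' X(1)] by simp
qed

lemma Tm_indeg_vec:
  assumes h: "is_orientation E ends h" and u: "u \<in> V"
  shows "Tm V K (indeg_vec V E h) u = {s\<in>V. (has_arc h)\<^sup>*\<^sup>* s u}"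
  unfolding Tm_eq
  using reaching_if_unit_shift_in_K[OF h _ u] unit_shift_in_K_if_path[OF h]
  by (auto dest: rtranclp_imp_relpowp)

lemma image_mset_indeg_vec:
  "image_mset (indeg_vec V E h) (mset_set V) = image_mset (indeg E h) (mset_set V)"
  using finite_V by (intro image_mset_cong) (simp add: indeg_vec_def)

end

locale dec_min_orientation = finite_graph V E ends
  for V :: "'v set" and E :: "'e set" and ends :: "'e \<Rightarrow> 'v \<times> 'v" +
  fixes h0 :: "'e \<Rightarrow> 'v"
  assumes orientation_h0: "is_orientation E ends h0"
    and dec_min_h0: "dec_min V K (indeg_vec V E h0)"
begin

abbreviation m :: "'v \<Rightarrow> int" where "m \<equiv> indeg_vec V E h0"
abbreviation C :: "nat \<Rightarrow> 'v set" where "C \<equiv> canon_C V K m"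
abbreviation S :: "nat \<Rightarrow> 'v set" where "S \<equiv> canon_S V K m"
abbreviation \<beta> :: "nat \<Rightarrow> int" where "\<beta> \<equiv> canon_beta V K m"
abbreviation q :: nat where "q \<equiv> canon_q V K m"

lemma beta_Suc: "\<beta> (Suc i) = Max (m ` (V - C i))"
  by (simp add: canon_beta_def)

lemma S_Suc: "S (Suc i) = C (Suc i) - C i"
  by (simp add: canon_S_def)

lemma C_Suc: "C (Suc i) = \<Union>{Tm V K m u | u. u \<in> V \<and> \<beta> (Suc i) \<le> m u}"
  by (simp add: beta_Suc Let_def)

declare canon_C.simps(2) [simp del]

lemma C_Suc_eq: "C (Suc i) = {s\<in>V. \<exists>u\<in>V. \<beta> (Suc i) \<le> m u \<and> (has_arc h0)\<^sup>*\<^sup>* s u}"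
  unfolding C_Suc by (auto simp: Tm_indeg_vec[OF orientation_h0])

lemma C_subset_V: "C i \<subseteq> V"
  by (cases i) (auto simp: C_Suc_eq)

lemma finite_C: "finite (C i)"
  using C_subset_V finite_V by (rule finite_subset)

lemma mem_C_Suc: "u \<in> V \<Longrightarrow> \<beta> (Suc i) \<le> m u \<Longrightarrow> u \<in> C (Suc i)"
  unfolding C_Suc_eq by blast

lemma in_closed_C: "in_closed h0 (C i)"
proof (cases i)
  case (Suc j)
  show ?thesis
    unfolding in_closed_def
  proof (intro ballI impI)
    fix e
    assume e: "e \<in> E" "h0 e \<in> C i"
    then obtain u where u: "u \<in> V" "\<beta> (Suc j) \<le> m u" "(has_arc h0)\<^sup>*\<^sup>* (h0 e) u"
      unfolding Suc C_Suc_eq by blast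
    have "(has_arc h0)\<^sup>*\<^sup>* (tail_of ends h0 e) (h0 e)"
      using e(1) unfolding has_arc_def by (cases "tail_of ends h0 e = h0 e") auto
    then show "tail_of ends h0 e \<in> C i"
      unfolding Suc C_Suc_eq using u e(1) tail_in_V rtranclp_trans by fastforce
  qed
qed (simp add: in_closed_def)

lemma less_beta_if_not_in_C: "w \<in> V - C (Suc i) \<Longrightarrow> m w < \<beta> (Suc i)"
  using mem_C_Suc by force

lemma C_psubset_Suc: "C i \<noteq> V \<Longrightarrow> C i \<subset> C (Suc i)"
proof -
  assume CV: "C i \<noteq> V"
  then have ne: "V - C i \<noteq> {}"
    using C_subset_V by blast
  have "C i \<subseteq> C (Suc i)"
  proof (cases i)
    case (Suc j)
    have "\<beta> (Suc i) < \<beta> (Suc j)"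
      unfolding beta_Suc[of i] using ne finite_V less_beta_if_not_in_C[of _ j] Suc
      by (subst Max_less_iff) auto
    then have "\<beta> (Suc j) \<le> m u \<Longrightarrow> \<beta> (Suc i) \<le> m u" for u
      by simp
    then show ?thesis
      unfolding Suc C_Suc_eq by blast
  qed simp
  moreover have "\<beta> (Suc i) \<in> m ` (V - C i)"
    unfolding beta_Suc using ne finite_V by (intro Max_in) auto
  then obtain w where "\<beta> (Suc i) = m w" "w \<in> V - C i"
    by (rule imageE)
  then have "w \<in> C (Suc i) - C i"
    using mem_C_Suc by auto
  ultimately show ?thesis by blast
qed

lemma C_q: "C q = V"
proof -
  have "\<exists>k. C k = V"
  proof (rule ccontr)
    assume "\<nexists>k. C k = V"
    then have card_C: "k \<le> card (C k)" for k
    proof (induction k)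
      case (Suc k)
      then show ?case
        using psubset_card_mono[OF finite_C C_psubset_Suc] by (meson Suc_le_eq le_less_trans)
    qed simp
    then show False
      using card_C[of "Suc (card V)"] card_mono[OF finite_V C_subset_V, of "Suc (card V)"] by simp
  qed
  then show ?thesis
    unfolding canon_q_def by (rule LeastI_ex)
qed

lemma C_neq_V: "k < q \<Longrightarrow> C k \<noteq> V"
  unfolding canon_q_def by (rule not_less_Least)

lemma C_subset_Suc: "k < q \<Longrightarrow> C k \<subseteq> C (Suc k)"
  using C_psubset_Suc C_neq_V by blast

lemma m_bounds:
  assumes v: "v \<in> S (Suc k)"
  shows "\<beta> (Suc k) - 1 \<le> m v \<and> m v \<le> \<beta> (Suc k)"
proof
  have "v \<in> V - C k"
    using v C_subset_V unfolding S_Suc by blast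
  then show "m v \<le> \<beta> (Suc k)"
    unfolding beta_Suc using finite_V by (simp add: Max_ge)
  obtain u where u: "u \<in> V" "\<beta> (Suc k) \<le> m u" "v \<in> Tm V K m u"
    using v unfolding S_Suc C_Suc by blast
  show "\<beta> (Suc k) - 1 \<le> m v"
  proof (rule ccontr)
    assume "\<not> \<beta> (Suc k) - 1 \<le> m v"
    then have "v \<noteq> u" "m v + 2 \<le> m u"
      using u(2) by auto
    then have "dec_smaller V (unit_shift m v u) m"
      by (rule dec_smaller_unit_shift[OF finite_V u(1)])
    moreover have "unit_shift m v u \<in> K"
      using u(3) unfolding Tm_eq by simp
    ultimately show False
      using dec_min_h0 unfolding dec_min_def by blast
  qed
qed

lemma finite_S: "finite (S i)"
  by (simp add: canon_S_def finite_C)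

definition fits_level :: "('e \<Rightarrow> 'v) \<Rightarrow> nat \<Rightarrow> bool" where
  "fits_level h i \<longleftrightarrow> indeg_set E ends h (C i) = 0 \<and>
     (\<forall>v\<in>S i. \<beta> i - 1 \<le> indeg E h v \<and> indeg E h v \<le> \<beta> i)"

lemma sum_C_indeg:
  assumes h: "is_orientation E ends h"
  shows "(\<Sum>v\<in>C i. indeg E h v) = (\<Sum>v\<in>C i. m v) + int (indeg_set E ends h (C i))"
proof -
  have "(\<Sum>v\<in>C i. m v) = (\<Sum>v\<in>C i. indeg E h0 v)"
    using C_subset_V by (intro sum.cong) (auto simp: indeg_vec_def)
  also have "\<dots> = int (inner_edges (C i))"
    using sum_indeg_eq[OF orientation_h0 finite_C] in_closed_C indeg_set_eq_0_iff by simp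
  finally show ?thesis
    using sum_indeg_eq[OF h finite_C] by simp
qed

lemma indeg_set_C_eq_0: "\<forall>i\<in>{1..k}. fits_level h i \<Longrightarrow> indeg_set E ends h (C k) = 0"
  by (cases k) (auto simp: fits_level_def indeg_set_def)

lemma sum_S_Suc_indeg:
  assumes h: "is_orientation E ends h" and k: "k < q" and closed: "indeg_set E ends h (C k) = 0"
  shows "(\<Sum>v\<in>S (Suc k). indeg E h v) = (\<Sum>v\<in>S (Suc k). m v) + int (indeg_set E ends h (C (Suc k)))"
proof -
  have "(\<Sum>v\<in>S (Suc k). indeg E h v) = (\<Sum>v\<in>C (Suc k). indeg E h v) - (\<Sum>v\<in>C k. indeg E h v)"
    and "(\<Sum>v\<in>S (Suc k). m v) = (\<Sum>v\<in>C (Suc k). m v) - (\<Sum>v\<in>C k. m v)"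
    unfolding S_Suc using C_subset_Suc[OF k] finite_C by (simp_all add: sum_diff)
  then show ?thesis
    using sum_C_indeg[OF h, of k] sum_C_indeg[OF h, of "Suc k"] closed by simp
qed

lemma image_mset_C_eq:
  assumes h: "is_orientation E ends h"
  shows "k \<le> q \<Longrightarrow> \<forall>i\<in>{1..k}. fits_level h i \<Longrightarrow>
    image_mset (indeg E h) (mset_set (C k)) = image_mset m (mset_set (C k))"
proof (induction k)
  case (Suc k)
  have k: "k < q"
    using Suc.prems(1) by simp
  have fits: "fits_level h (Suc k)" "\<forall>i\<in>{1..k}. fits_level h i"
    using Suc.prems(2) by auto
  have "(\<Sum>v\<in>S (Suc k). indeg E h v) = (\<Sum>v\<in>S (Suc k). m v)"
    using sum_S_Suc_indeg[OF h k indeg_set_C_eq_0[OF fits(2)]] fits(1)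
    by (simp add: fits_level_def)
  then have "image_mset (indeg E h) (mset_set (S (Suc k))) = image_mset m (mset_set (S (Suc k)))"
    using fits(1) m_bounds unfolding fits_level_def by (intro image_mset_eq_if_two_levels finite_S) auto
  moreover have "C (Suc k) = C k \<union> S (Suc k)" "C k \<inter> S (Suc k) = {}"
    unfolding S_Suc using C_subset_Suc[OF k] by auto
  ultimately show ?case
    using Suc.IH k fits(2) mset_set_Union[OF finite_C finite_S, of k "Suc k"] by simp
qed simp

text \<open>The top value \<beta>_{k+1} of m outside C_k is taken only inside S_{k+1}. If h has the same
  value multiset, counting that top value shows that the sum of h over S_{k+1} is at most the
  sum of m, whereas it exceeds it by \<rho>_h(C_{k+1}); this forces both conditions of the
  next level.\<close>

lemma fits_level_Suc:
  assumes h: "is_orientation E ends h"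
    and same: "image_mset (indeg E h) (mset_set V) = image_mset m (mset_set V)"
    and k: "k < q" and fits: "\<forall>i\<in>{1..k}. fits_level h i"
  shows "fits_level h (Suc k)"
proof -
  let ?f = "indeg E h" and ?T = "S (Suc k)" and ?b = "\<beta> (Suc k)"
  define W where "W = V - C k"
  have T_W: "?T \<subseteq> W" and finite_W: "finite W"
    unfolding W_def S_Suc using C_subset_V finite_V by auto
  have same_W: "image_mset ?f (mset_set W) = image_mset m (mset_set W)"
  proof -
    have "mset_set V = mset_set (C k) + mset_set W"
      unfolding W_def using mset_set_Union[OF finite_C finite_W, of k] C_subset_V
      by (simp add: W_def Un_absorb1 Un_Diff_cancel)
    then show ?thesis
      using same image_mset_C_eq[OF h less_imp_le[OF k] fits] by simp
  qed
  have f_le: "\<forall>v\<in>W. ?f v \<le> ?b"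
  proof
    fix v
    assume "v \<in> W"
    then have "?f v \<in> m ` W"
      using finite_W arg_cong[OF same_W, of set_mset] by auto
    then show "?f v \<le> ?b"
      unfolding beta_Suc W_def using finite_V by auto
  qed
  have "card {v\<in>?T. ?f v = ?b} \<le> card {v\<in>W. ?f v = ?b}"
    using T_W finite_W by (intro card_mono) auto
  also have "\<dots> = card {v\<in>W. m v = ?b}"
    using arg_cong[OF same_W, of "\<lambda>M. count M ?b"] finite_W by (simp add: count_image_mset_mset_set)
  also have "{v\<in>W. m v = ?b} = {v\<in>?T. m v = ?b}"
    using mem_C_Suc T_W unfolding W_def S_Suc by auto
  finally have top: "card {v\<in>?T. ?f v = ?b} \<le> card {v\<in>?T. m v = ?b}" .
  have m_sum: "(\<Sum>v\<in>?T. m v) = (?b - 1) * int (card ?T) + int (card {v\<in>?T. m v = ?b})"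
    using sum_two_levels_le(2)[OF finite_S[of "Suc k"], of m ?b] m_bounds by auto
  have f_sum: "(\<Sum>v\<in>?T. ?f v) = (\<Sum>v\<in>?T. m v) + int (indeg_set E ends h (C (Suc k)))"
    using sum_S_Suc_indeg[OF h k indeg_set_C_eq_0[OF fits]] .
  have f_le_T: "\<forall>v\<in>?T. ?f v \<le> ?b"
    using f_le T_W by blast
  have f_sum_eq: "(\<Sum>v\<in>?T. ?f v) = (?b - 1) * int (card ?T) + int (card {v\<in>?T. ?f v = ?b})"
    using sum_two_levels_le(1)[OF finite_S f_le_T] top m_sum f_sum by linarith
  then have "\<forall>v\<in>?T. ?b - 1 \<le> ?f v"
    using sum_two_levels_le(2)[OF finite_S f_le_T] by blast
  moreover have "indeg_set E ends h (C (Suc k)) = 0"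
    using f_sum_eq top m_sum f_sum by linarith
  ultimately show ?thesis
    using f_le_T unfolding fits_level_def by blast
qed

lemma dec_min_iff_fits_levels:
  assumes h: "is_orientation E ends h"
  shows "dec_min V K (indeg_vec V E h) \<longleftrightarrow> (\<forall>i\<in>{1..q}. fits_level h i)"
proof
  assume "dec_min V K (indeg_vec V E h)"
  then have "image_mset (indeg_vec V E h) (mset_set V) = image_mset m (mset_set V)"
    by (rule dec_min_image_mset_eq[OF dec_min_h0])
  then have same: "image_mset (indeg E h) (mset_set V) = image_mset m (mset_set V)"
    unfolding image_mset_indeg_vec[of h] .
  have "k \<le> q \<Longrightarrow> \<forall>i\<in>{1..k}. fits_level h i" for k
  proof (induction k)
    case (Suc k)
    then show ?case
      using fits_level_Suc[OF h same, of k] by (auto simp: le_Suc_eq)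
  qed simp
  then show "\<forall>i\<in>{1..q}. fits_level h i"
    by blast
next
  assume "\<forall>i\<in>{1..q}. fits_level h i"
  then have "image_mset (indeg E h) (mset_set V) = image_mset m (mset_set V)"
    using image_mset_C_eq[OF h, of q] C_q by simp
  then show "dec_min V K (indeg_vec V E h)"
    unfolding image_mset_indeg_vec[of h, symmetric]
    by (rule dec_min_if_image_mset_eq[OF dec_min_h0 indeg_vec_in_K[OF h]])
qed

end

theorem theorem4p7:
  fixes V :: "'v set" and E :: "'e set" and ends :: "'e \<Rightarrow> 'v \<times> 'v"
    and h :: "'e \<Rightarrow> 'v" and m :: "'v \<Rightarrow> int"
  assumes "finite V" and "finite E"
    and "\<forall>e\<in>E. fst (ends e) \<in> V \<and> snd (ends e) \<in> V"
    and "is_orientation E ends h"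
    and "dec_min V (indeg_vectors V E ends) m"
  shows "dec_min V (indeg_vectors V E ends) (indeg_vec V E h) \<longleftrightarrow>
    ((\<forall>i\<in>{1..canon_q V (indeg_vectors V E ends) m}.
        indeg_set E ends h (canon_C V (indeg_vectors V E ends) m i) = 0) \<and>
     (\<forall>i\<in>{1..canon_q V (indeg_vectors V E ends) m}.
        \<forall>v\<in>canon_S V (indeg_vectors V E ends) m i.
          canon_beta V (indeg_vectors V E ends) m i - 1 \<le> indeg E h v \<and>
          indeg E h v \<le> canon_beta V (indeg_vectors V E ends) m i))"
proof -
  obtain h0 where h0: "is_orientation E ends h0" and m: "m = indeg_vec V E h0"
    using assms(5) unfolding dec_min_def indeg_vectors_def by blast
  interpret dec_min_orientation V E ends h0
    using assms h0 m by unfold_locales auto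
  show ?thesis
    using dec_min_iff_fits_levels[OF assms(4)]
    unfolding m fits_level_def by (simp add: ball_conj_distrib)
qed

end
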